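(* Let $T=(V,E,r)$ be a finite rooted tree embedded in $\mathbb R^n$ as described in the context, and let $i,j,k$ be three adjacent nodes with $i<j<k$ (i.e. $i$ is the parent of $j$ and $j$ is the parent of $k$). Assume that Assumption A1 holds: for all $x,x'\in[x_i,x_j]$ and $y,y'\in[x_j,x_k]$, $\ell([x,y])\le\ell([x',y'])\Rightarrow\|x-y\|\le\|x'-y'\|$. Then $$\langle\mu_{[x_i,x_j]},\mu_{[x_j,x_k]}\rangle_{W^\ast}=o\Big(\|\mu_{[x_i,x_j]}\|^2_{W^\ast}+\|\mu_{[x_j,x_k]}\|^2_{W^\ast}\Big)$$ as $\sigma_x,\sigma_t\to0$ with $\sigma_x\asymp\sigma_t$, where $\sigma_x\asymp\sigma_t$ means there exist constants $k_1,k_2>0$ with $k_1\sigma_x\le\sigma_t\le k_2\sigma_x$.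
   Context: Rooted tree and embedding. $T=(V,E,r)$ is a finite rooted tree with root $r$; $i<j$ means $i$ is the parent of $j$. The tree is embedded in $\mathbb R^n$ via an injective map $i\mapsto x_i\in\mathbb R^n$ and a map sending each edge $(i,j)$ to a smooth curve segment $[x_i,x_j]$ joining $x_i$ and $x_j$ (not necessarily a line segment); embeddings of two edges intersect only if the edges share a node, and only at the image of that node. The embedding of the path from $r$ to any node is a smooth, regular curve of finite length, oriented from the root to the end node; $[x,y]$ denotes the sub-arc between two points on a common embedded root-to-node path. $\ell(\gamma)$ is arc length, $\vec t(x)\in\mathbb S^{n-1}$ the unit oriented tangent vector at $x$. For $\sigma_x,\sigma_t>0$ and smooth oriented curves $X,Y$ of finite length, $$\langle\mu_X,\mu_Y\rangle_{W^\ast}=\iint_{X\times Y} e^{-\|x-y\|^2/\sigma_x^2}\,e^{-\|\vec t(x)-\vec t(y)\|^2/\sigma_t^2}\,d\ell(x)\,d\ell(y),\qquad \|\mu_X\|^2_{W^\ast}=\langle\mu_X,\mu_X\rangle_{W^\ast}$$ (the oriented-varifold inner product induced by the Gaussian tensor-product kernel with parameters $\sigma_x,\sigma_t$). *)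

theory Defs
  imports "HOL-Analysis.Analysis" "HOL-Library.Landau_Symbols"
begin

fun vderiv_n :: "nat \<Rightarrow> (real \<Rightarrow> 'a::real_normed_vector) \<Rightarrow> real \<Rightarrow> 'a" where
  "vderiv_n 0 f = f"
| "vderiv_n (Suc k) f = (\<lambda>t. vector_derivative (vderiv_n k f) (at t))"

definition smooth_curve_on :: "real set \<Rightarrow> (real \<Rightarrow> 'a::real_normed_vector) \<Rightarrow> bool" where
  "smooth_curve_on U f \<longleftrightarrow> open U \<and> (\<forall>k. \<forall>t\<in>U. vderiv_n k f differentiable (at t))"

definition unit_tangent :: "(real \<Rightarrow> 'a::real_normed_vector) \<Rightarrow> real \<Rightarrow> 'a" where
  "unit_tangent g s = sgn (vector_derivative g (at s))"

definition arc_len :: "(real \<Rightarrow> 'a::real_normed_vector) \<Rightarrow> real \<Rightarrow> real \<Rightarrow> real" where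
  "arc_len g s t = integral {min s t..max s t} (\<lambda>u. norm (vector_derivative g (at u)))"

text \<open>Oriented varifold inner product (Gaussian kernels) of the oriented curves
  g restricted to [a,b] and h restricted to [c,d], written via the parametrizations:
  d ell(x) = norm g'(s) ds.\<close>
definition varifold_inner ::
  "real \<Rightarrow> real \<Rightarrow> (real \<Rightarrow> 'a::real_inner) \<Rightarrow> real \<Rightarrow> real \<Rightarrow> (real \<Rightarrow> 'a) \<Rightarrow> real \<Rightarrow> real \<Rightarrow> real" where
  "varifold_inner sx st g a b h c d =
     integral {a..b} (\<lambda>s. integral {c..d} (\<lambda>t.
        exp (- (norm (g s - h t))\<^sup>2 / sx\<^sup>2) *
        exp (- (norm (unit_tangent g s - unit_tangent h t))\<^sup>2 / st\<^sup>2) *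
        norm (vector_derivative g (at s)) * norm (vector_derivative h (at t))))"

definition varifold_norm2 :: "real \<Rightarrow> real \<Rightarrow> (real \<Rightarrow> 'a::real_inner) \<Rightarrow> real \<Rightarrow> real \<Rightarrow> real" where
  "varifold_norm2 sx st g a b = varifold_inner sx st g a b g a b"

text \<open>Filter for (sigma_x, sigma_t) \<rightarrow> (0,0) with sigma_x, sigma_t > 0 and
  k1 sigma_x \<le> sigma_t \<le> k2 sigma_x.\<close>
definition comparable_to_zero :: "real \<Rightarrow> real \<Rightarrow> (real \<times> real) filter" where
  "comparable_to_zero k1 k2 =
     at (0, 0) within {p. 0 < fst p \<and> 0 < snd p \<and> k1 * fst p \<le> snd p \<and> snd p \<le> k2 * fst p}"

end

(*
  Write sx, st for sigma_x, sigma_t and parametrize both edges by gamma on [a,b] and [b,c].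
  On the band |s - s'| <= sx the position kernel is bounded below because gamma is Lipschitz,
  and so is the tangent kernel because the unit tangent is Lipschitz and st >= k1 sx;
  integrating over the band bounds the squared norm of the first edge below by C2 sx.
  For the cross term, injectivity and regularity at the junction give a chord bound
  |gamma t - gamma s| >= m (t - s) for s <= b <= t: near b the curve moves almost along
  gamma'(b), and away from b the two edges are disjoint compacta.  Since
  exp (- u^2) <= e exp (- 2 u), the cross integrand is dominated by a product of two
  exponentials decaying away from b at rate 2 m / sx, so the cross term is at most C1 sx^2.
  Hence the quotient is O(sx).
*)

theory Submission
  imports Defs
begin

lemma exp_neg_square_le: "exp (- (x::real)\<^sup>2) \<le> exp 1 * exp (- 2 * x)"
proof -
  have "- x\<^sup>2 \<le> 1 - 2 * x"
    using zero_le_power2[of "x - 1"] by (simp add: power2_diff)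
  then show ?thesis by (simp flip: exp_add)
qed

lemma exp_neg_square_div_le:
  fixes d D \<sigma> :: real
  assumes "0 \<le> d" "d \<le> D" "0 < \<sigma>"
  shows "exp (- D\<^sup>2 / \<sigma>\<^sup>2) \<le> exp 1 * exp (- 2 * d / \<sigma>)"
proof -
  have "(d / \<sigma>)\<^sup>2 \<le> (D / \<sigma>)\<^sup>2"
    using assms by (intro power_mono divide_right_mono) auto
  then have "exp (- D\<^sup>2 / \<sigma>\<^sup>2) \<le> exp (- (d / \<sigma>)\<^sup>2)"
    by (simp add: power_divide)
  also have "\<dots> \<le> exp 1 * exp (- 2 * d / \<sigma>)"
    using exp_neg_square_le[of "d / \<sigma>"] by simp
  finally show ?thesis .
qed

lemma exp_neg_square_div_ge:
  fixes d B \<sigma> :: real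
  assumes "0 \<le> d" "d \<le> B * \<sigma>" "0 < \<sigma>"
  shows "exp (- B\<^sup>2) \<le> exp (- d\<^sup>2 / \<sigma>\<^sup>2)"
proof -
  have "d / \<sigma> \<le> B"
    using assms by (simp add: divide_le_eq)
  then have "(d / \<sigma>)\<^sup>2 \<le> B\<^sup>2"
    using assms by (intro power_mono) auto
  then show ?thesis
    by (simp add: power_divide)
qed

lemma norm_sgn_diff_le:
  fixes u v :: "'a::real_normed_vector"
  assumes "u \<noteq> 0" "v \<noteq> 0"
  shows "norm (sgn u - sgn v) \<le> 2 * norm (u - v) / norm u"
proof -
  have nu: "norm u > 0" and nv: "norm v > 0" using assms by simp_all
  have split: "sgn u - sgn v = (1 / norm u) *\<^sub>R (u - v) + (1 / norm u - 1 / norm v) *\<^sub>R v"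
    by (simp add: sgn_div_norm algebra_simps divide_inverse)
  have "norm ((1 / norm u - 1 / norm v) *\<^sub>R v) = \<bar>norm v - norm u\<bar> / norm u"
    using nu nv by (simp add: field_simps abs_mult)
  also have "\<dots> \<le> norm (u - v) / norm u"
    using nu norm_triangle_ineq3[of v u] by (intro divide_right_mono) (auto simp: norm_minus_commute)
  finally have "norm (sgn u - sgn v) \<le> norm (u - v) / norm u + norm (u - v) / norm u"
    unfolding split using nu by (intro order_trans[OF norm_triangle_ineq] add_mono) auto
  then show ?thesis by simp
qed

lemma vector_derivative_bound_imp_lipschitz:
  fixes f :: "real \<Rightarrow> 'a::real_normed_vector"
  assumes "\<And>t. t \<in> {a..c} \<Longrightarrow> (f has_vector_derivative f' t) (at t)"
    and "\<And>t. t \<in> {a..c} \<Longrightarrow> norm (f' t) \<le> B" and "0 \<le> B"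
  shows "B-lipschitz_on {a..c} f"
proof (rule bounded_derivative_imp_lipschitz)
  show "(f has_derivative (\<lambda>h. h *\<^sub>R f' t)) (at t within {a..c})" if "t \<in> {a..c}" for t
    using assms(1)[OF that] by (simp add: has_vector_derivative_def has_derivative_at_withinI)
  show "onorm (\<lambda>h. h *\<^sub>R f' t) \<le> B" if "t \<in> {a..c}" for t
    using assms(2)[OF that] onorm_scaleR_left[OF bounded_linear_ident, of "f' t"] by (simp add: onorm_id)
qed (use assms(3) in auto)

lemma integral_exp_decay_le:
  fixes r p q :: real
  assumes "r > 0" "p \<le> q"
  shows "integral {p..q} (\<lambda>t. exp (- r * (t - p))) \<le> 1 / r"
proof -
  have "((\<lambda>t. exp (- r * (t - p))) has_integral
          (- exp (- r * (q - p)) / r - - exp (- r * (p - p)) / r)) {p..q}"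
  proof (rule fundamental_theorem_of_calculus[OF \<open>p \<le> q\<close>])
    fix t
    have "((\<lambda>t. - exp (- r * (t - p)) / r) has_real_derivative exp (- r * (t - p))) (at t)"
      using assms(1) by (auto intro!: derivative_eq_intros)
    then show "((\<lambda>t. - exp (- r * (t - p)) / r) has_vector_derivative exp (- r * (t - p)))
        (at t within {p..q})"
      by (simp add: has_real_derivative_iff_has_vector_derivative[symmetric] has_field_derivative_at_within)
  qed
  then show ?thesis
    using assms(1) by (simp add: integral_unique)
qed

lemma integral_exp_growth_le:
  fixes r p q :: real
  assumes "r > 0" "p \<le> q"
  shows "integral {p..q} (\<lambda>s. exp (- r * (q - s))) \<le> 1 / r"
proof -
  have "integral {p..q} (\<lambda>s. exp (- r * (q - s))) = integral {-q..-p} (\<lambda>t. exp (- r * (q - - t)))"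
    using Henstock_Kurzweil_Integration.integral_reflect_real[of q p "\<lambda>s. exp (- r * (q - s))"] by simp
  also have "\<dots> = integral {-q..-p} (\<lambda>t. exp (- r * (t - -q)))"
    by (simp add: algebra_simps)
  also have "\<dots> \<le> 1 / r"
    using assms by (intro integral_exp_decay_le) auto
  finally show ?thesis .
qed

section \<open>Chords of an injective curve across a regular point\<close>

lemma continuous_inj_on_separates_compacts:
  fixes \<gamma> :: "'a::metric_space \<Rightarrow> 'b::heine_borel"
  assumes "continuous_on X \<gamma>" "inj_on \<gamma> X"
    and "compact S" "compact T" "S \<inter> T = {}" "S \<subseteq> X" "T \<subseteq> X"
  obtains d where "d > 0" "\<And>s t. s \<in> S \<Longrightarrow> t \<in> T \<Longrightarrow> d \<le> dist (\<gamma> s) (\<gamma> t)"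
proof -
  have "compact (\<gamma> ` S)" "compact (\<gamma> ` T)"
    using assms(1,3,4,6,7) by (metis compact_continuous_image continuous_on_subset)+
  moreover have "\<gamma> ` S \<inter> \<gamma> ` T = {}"
    using assms(2,5-7) by (auto dest: inj_onD)
  ultimately obtain d where "d > 0" "\<forall>x\<in>\<gamma> ` S. \<forall>y\<in>\<gamma> ` T. d \<le> dist x y"
    using separate_compact_closed compact_imp_closed by metis
  then show ?thesis
    using that by blast
qed

lemma chord_ge_if_derivative_near:
  fixes \<gamma> :: "real \<Rightarrow> 'a::real_inner"
  assumes "s \<le> t"
    and der: "\<And>x. x \<in> {s..t} \<Longrightarrow> (\<gamma> has_vector_derivative D x) (at x)"
    and near: "\<And>x. x \<in> {s..t} \<Longrightarrow> norm (D x - v) \<le> norm v / 2"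
  shows "norm v / 2 * (t - s) \<le> norm (\<gamma> t - \<gamma> s)"
proof (cases "v = 0")
  case False
  have deriv: "((\<lambda>u. \<gamma> u \<bullet> v) has_derivative (\<lambda>h. h * (D x \<bullet> v))) (at x within {s..t})"
    if "x \<in> {s..t}" for x
  proof -
    have "(\<gamma> has_derivative (\<lambda>h. h *\<^sub>R D x)) (at x within {s..t})"
      using der[OF that] by (simp add: has_vector_derivative_def has_derivative_at_withinI)
    from has_derivative_inner[OF this has_derivative_const[of v]] show ?thesis
      by simp
  qed
  from mvt_very_simple[OF \<open>s \<le> t\<close> deriv]
  obtain x where x: "x \<in> {s..t}" "\<gamma> t \<bullet> v - \<gamma> s \<bullet> v = (t - s) * (D x \<bullet> v)"
    by auto
  have "- ((D x - v) \<bullet> v) \<le> norm (D x - v) * norm v"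
    using Cauchy_Schwarz_ineq2[of "D x - v" v] by (simp only: abs_le_iff)
  also have "\<dots> \<le> norm v / 2 * norm v"
    using near[OF x(1)] by (rule mult_right_mono) simp
  finally have "norm v / 2 * norm v \<le> D x \<bullet> v"
    using dot_square_norm[of v] by (simp add: inner_diff_left power2_eq_square)
  then have "(t - s) * (norm v / 2 * norm v) \<le> (t - s) * (D x \<bullet> v)"
    using \<open>s \<le> t\<close> by (intro mult_left_mono) auto
  also have "\<dots> = (\<gamma> t - \<gamma> s) \<bullet> v"
    by (simp only: inner_diff_left x(2))
  also have "\<dots> \<le> norm (\<gamma> t - \<gamma> s) * norm v"
    by (rule norm_cauchy_schwarz)
  finally have "norm v / 2 * (t - s) * norm v \<le> norm (\<gamma> t - \<gamma> s) * norm v"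
    by (simp only: ac_simps)
  then show ?thesis
    using mult_right_le_imp_le False by (auto simp: mult.commute)
qed simp

lemma chord_ge_near_regular_point:
  fixes \<gamma> :: "real \<Rightarrow> 'a::real_inner"
  assumes der: "\<And>t. t \<in> {a..c} \<Longrightarrow> (\<gamma> has_vector_derivative D t) (at t)"
    and "continuous_on {a..c} D" "b \<in> {a..c}"
  obtains \<delta> where "\<delta> > 0"
    "\<And>s t. s \<in> {a..c} \<Longrightarrow> t \<in> {a..c} \<Longrightarrow> b - \<delta> < s \<Longrightarrow> s \<le> t \<Longrightarrow> t < b + \<delta> \<Longrightarrow>
      norm (D b) / 2 * (t - s) \<le> norm (\<gamma> t - \<gamma> s)"
proof (cases "D b = 0")
  case False
  then obtain \<delta> where \<delta>: "\<delta> > 0" "\<And>x. x \<in> {a..c} \<Longrightarrow> dist x b < \<delta> \<Longrightarrow> dist (D x) (D b) < norm (D b) / 2"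
    using \<open>continuous_on {a..c} D\<close> \<open>b \<in> {a..c}\<close> unfolding continuous_on_iff by (metis half_gt_zero zero_less_norm_iff)
  have "norm (D b) / 2 * (t - s) \<le> norm (\<gamma> t - \<gamma> s)"
    if "s \<in> {a..c}" "t \<in> {a..c}" "b - \<delta> < s" "s \<le> t" "t < b + \<delta>" for s t
  proof (rule chord_ge_if_derivative_near[OF \<open>s \<le> t\<close>])
    fix x
    assume "x \<in> {s..t}"
    then have "x \<in> {a..c}" "dist x b < \<delta>"
      using that by (auto simp: dist_real_def)
    then have "dist (D x) (D b) < norm (D b) / 2"
      by (rule \<delta>(2))
    then show "norm (D x - D b) \<le> norm (D b) / 2"
      by (simp add: dist_norm)
  qed (use that der in auto)
  with \<delta>(1) show ?thesis
    using that by blast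
qed (use that[of 1] in auto)

lemma chord_ge_across_regular_point:
  fixes \<gamma> :: "real \<Rightarrow> 'a::euclidean_space"
  assumes "a < b" "b < c"
    and der: "\<And>t. t \<in> {a..c} \<Longrightarrow> (\<gamma> has_vector_derivative D t) (at t)"
    and "continuous_on {a..c} D" "D b \<noteq> 0" and inj: "inj_on \<gamma> {a..c}"
  obtains m where "m > 0" "\<And>s t. s \<in> {a..b} \<Longrightarrow> t \<in> {b..c} \<Longrightarrow> m * (t - s) \<le> norm (\<gamma> t - \<gamma> s)"
proof -
  obtain \<delta> where \<delta>: "\<delta> > 0"
    "\<And>s t. s \<in> {a..c} \<Longrightarrow> t \<in> {a..c} \<Longrightarrow> b - \<delta> < s \<Longrightarrow> s \<le> t \<Longrightarrow> t < b + \<delta> \<Longrightarrow>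
      norm (D b) / 2 * (t - s) \<le> norm (\<gamma> t - \<gamma> s)"
    using chord_ge_near_regular_point[OF der \<open>continuous_on {a..c} D\<close>, of b] assms(1,2) by auto
  have cont: "continuous_on {a..c} \<gamma>"
    using der by (meson continuous_at_imp_continuous_on has_vector_derivative_continuous)
  obtain d1 where d1: "d1 > 0" "\<And>s t. s \<in> {a..b - \<delta>} \<Longrightarrow> t \<in> {b..c} \<Longrightarrow> d1 \<le> norm (\<gamma> t - \<gamma> s)"
    using continuous_inj_on_separates_compacts[OF cont inj, of "{a..b - \<delta>}" "{b..c}"] \<delta>(1) assms(1,2)
    by (auto simp: dist_norm norm_minus_commute)
  obtain d2 where d2: "d2 > 0" "\<And>s t. s \<in> {a..b} \<Longrightarrow> t \<in> {b + \<delta>..c} \<Longrightarrow> d2 \<le> norm (\<gamma> t - \<gamma> s)"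
    using continuous_inj_on_separates_compacts[OF cont inj, of "{a..b}" "{b + \<delta>..c}"] \<delta>(1) assms(1,2)
    by (auto simp: dist_norm norm_minus_commute)
  define m where "m = min (norm (D b) / 2) (min d1 d2 / (c - a))"
  have "m \<le> norm (D b) / 2"
    unfolding m_def by (rule min.cobounded1)
  have "m > 0"
    using \<open>D b \<noteq> 0\<close> d1 d2 \<open>a < b\<close> \<open>b < c\<close> by (simp add: m_def)
  moreover have "m * (t - s) \<le> norm (\<gamma> t - \<gamma> s)" if st: "s \<in> {a..b}" "t \<in> {b..c}" for s t
  proof -
    have "m * (t - s) \<le> min d1 d2 / (c - a) * (c - a)"
      using st \<open>m > 0\<close> by (intro mult_mono) (auto simp: m_def)
    then have far: "m * (t - s) \<le> min d1 d2"
      using \<open>a < b\<close> \<open>b < c\<close> by simp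
    have near: "m * (t - s) \<le> norm (D b) / 2 * (t - s)"
      using st \<open>m \<le> norm (D b) / 2\<close> by (intro mult_right_mono) auto
    consider "s \<le> b - \<delta>" | "b + \<delta> \<le> t" | "b - \<delta> < s" "t < b + \<delta>"
      by linarith
    then show ?thesis
      using far d1(2)[of s t] d2(2)[of s t] near \<delta>(2)[of s t] st \<open>b < c\<close> by cases auto
  qed
  ultimately show ?thesis
    using that by blast
qed

section \<open>Iterated integrals of continuous functions on rectangles\<close>

lemma continuous_on_slice:
  assumes "continuous_on (A \<times> B) (\<lambda>(s, t). F s t)" "s \<in> A"
  shows "continuous_on B (F s)"
  using continuous_on_compose2[OF assms(1) continuous_on_Pair[OF continuous_on_const continuous_on_id]] assms(2)
  by auto

lemma continuous_on_inner_integral: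
  fixes F :: "'a::topological_space \<Rightarrow> real \<Rightarrow> real"
  assumes "continuous_on (U \<times> {c..d}) (\<lambda>(s, t). F s t)"
  shows "continuous_on U (\<lambda>s. integral {c..d} (F s))"
  using integral_continuous_on_param[of U c d F] assms by (simp add: cbox_interval)

lemma iterated_integral_nonneg:
  fixes F :: "real \<Rightarrow> real \<Rightarrow> real"
  assumes "continuous_on ({a..b} \<times> {c..d}) (\<lambda>(s, t). F s t)"
    and "\<And>s t. s \<in> {a..b} \<Longrightarrow> t \<in> {c..d} \<Longrightarrow> 0 \<le> F s t"
  shows "0 \<le> integral {a..b} (\<lambda>s. integral {c..d} (F s))"
  using assms continuous_on_inner_integral[OF assms(1)]
  by (auto intro!: integral_nonneg integrable_continuous_interval continuous_on_slice[OF assms(1)])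

lemma iterated_integral_le_product:
  fixes F :: "real \<Rightarrow> real \<Rightarrow> real"
  assumes cont: "continuous_on ({a..b} \<times> {c..d}) (\<lambda>(s, t). F s t)"
    and "continuous_on {a..b} g" "continuous_on {c..d} h"
    and le: "\<And>s t. s \<in> {a..b} \<Longrightarrow> t \<in> {c..d} \<Longrightarrow> F s t \<le> K * g s * h t"
  shows "integral {a..b} (\<lambda>s. integral {c..d} (F s)) \<le> K * integral {a..b} g * integral {c..d} h"
proof -
  have "integral {a..b} (\<lambda>s. integral {c..d} (F s)) \<le> integral {a..b} (\<lambda>s. integral {c..d} (\<lambda>t. K * g s * h t))"
  proof (rule integral_le)
    show "(\<lambda>s. integral {c..d} (F s)) integrable_on {a..b}"
      by (intro integrable_continuous_interval continuous_on_inner_integral[OF cont])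
    show "(\<lambda>s. integral {c..d} (\<lambda>t. K * g s * h t)) integrable_on {a..b}"
      using assms(2) by (simp add: integrable_continuous_interval continuous_intros)
    show "integral {c..d} (F s) \<le> integral {c..d} (\<lambda>t. K * g s * h t)" if "s \<in> {a..b}" for s
      using le that continuous_on_slice[OF cont that] assms(3)
      by (intro integral_le) (auto intro!: integrable_continuous_interval continuous_intros)
  qed
  also have "\<dots> = K * integral {a..b} g * integral {c..d} h"
    by (simp add: algebra_simps)
  finally show ?thesis .
qed

lemma iterated_integral_le_exp_decay:
  fixes F :: "real \<Rightarrow> real \<Rightarrow> real"
  assumes cont: "continuous_on ({a..b} \<times> {b..c}) (\<lambda>(s, t). F s t)"
    and "a \<le> b" "b \<le> c" "0 < r" "0 \<le> K"
    and le: "\<And>s t. s \<in> {a..b} \<Longrightarrow> t \<in> {b..c} \<Longrightarrow> F s t \<le> K * exp (- r * (t - s))"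
  shows "integral {a..b} (\<lambda>s. integral {b..c} (F s)) \<le> K / r\<^sup>2"
proof -
  have "integral {a..b} (\<lambda>s. integral {b..c} (F s))
      \<le> K * integral {a..b} (\<lambda>s. exp (- r * (b - s))) * integral {b..c} (\<lambda>t. exp (- r * (t - b)))"
  proof (rule iterated_integral_le_product[OF cont])
    show "F s t \<le> K * exp (- r * (b - s)) * exp (- r * (t - b))" if "s \<in> {a..b}" "t \<in> {b..c}" for s t
      using le[OF that] by (simp add: mult.assoc algebra_simps flip: exp_add)
  qed (intro continuous_intros)+
  also have "\<dots> \<le> K * (1 / r) * (1 / r)"
  proof (intro mult_mono mult_left_mono)
    show "integral {a..b} (\<lambda>s. exp (- r * (b - s))) \<le> 1 / r"
      using assms by (intro integral_exp_growth_le) auto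
    show "integral {b..c} (\<lambda>t. exp (- r * (t - b))) \<le> 1 / r"
      using assms by (intro integral_exp_decay_le) auto
    show "0 \<le> integral {a..b} (\<lambda>s. exp (- r * (b - s)))" "0 \<le> integral {b..c} (\<lambda>t. exp (- r * (t - b)))"
      using assms by (intro integral_nonneg integrable_continuous_interval continuous_intros; simp)+
  qed (use assms in auto)
  also have "\<dots> = K / r\<^sup>2"
    by (simp add: power2_eq_square)
  finally show ?thesis .
qed

lemma iterated_integral_ge_near_diagonal:
  fixes F :: "real \<Rightarrow> real \<Rightarrow> real"
  assumes cont: "continuous_on ({a..b} \<times> {a..b}) (\<lambda>(s, t). F s t)"
    and h: "0 < h" "h \<le> b - a"
    and nonneg: "\<And>s t. s \<in> {a..b} \<Longrightarrow> t \<in> {a..b} \<Longrightarrow> 0 \<le> F s t"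
    and near: "\<And>s t. s \<in> {a..b} \<Longrightarrow> t \<in> {a..b} \<Longrightarrow> \<bar>s - t\<bar> \<le> h \<Longrightarrow> \<mu> \<le> F s t"
  shows "(b - a) * h * \<mu> \<le> integral {a..b} (\<lambda>s. integral {a..b} (F s))"
proof -
  have inner: "h * \<mu> \<le> integral {a..b} (F s)" if s: "s \<in> {a..b}" for s
  proof -
    define l where "l = min s (b - h)"
    have window: "{l..l + h} \<subseteq> {a..b}"
      using s h by (auto simp: l_def)
    have Fs: "continuous_on {a..b} (F s)"
      using continuous_on_slice[OF cont s] .
    have "h * \<mu> = integral {l..l + h} (\<lambda>t. \<mu>)"
      using h by simp
    also have "\<dots> \<le> integral {l..l + h} (F s)"
    proof (intro integral_le integrable_continuous_interval continuous_on_subset[OF Fs window] ballI)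
      fix t assume "t \<in> {l..l + h}"
      then have "\<bar>s - t\<bar> \<le> h"
        using s by (auto simp: l_def)
      then show "\<mu> \<le> F s t"
        using near s window \<open>t \<in> {l..l + h}\<close> by blast
    qed simp
    also have "\<dots> \<le> integral {a..b} (F s)"
      using nonneg s by (intro integral_subset_le window integrable_continuous_interval Fs
          continuous_on_subset[OF Fs window]) auto
    finally show ?thesis .
  qed
  have "(b - a) * h * \<mu> = integral {a..b} (\<lambda>s. h * \<mu>)"
    using h by simp
  also have "\<dots> \<le> integral {a..b} (\<lambda>s. integral {a..b} (F s))"
    using inner by (intro integral_le integrable_continuous_interval continuous_on_inner_integral[OF cont]) auto
  finally show ?thesis .
qed

section \<open>The varifold integrand\<close>

definition varifold_integrand ::
  "real \<Rightarrow> real \<Rightarrow> (real \<Rightarrow> 'a::real_inner) \<Rightarrow> (real \<Rightarrow> 'a) \<Rightarrow> real \<Rightarrow> real \<Rightarrow> real" where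
  "varifold_integrand sx st g h s t =
     exp (- (norm (g s - h t))\<^sup>2 / sx\<^sup>2) *
     exp (- (norm (unit_tangent g s - unit_tangent h t))\<^sup>2 / st\<^sup>2) *
     (norm (vector_derivative g (at s)) * norm (vector_derivative h (at t)))"

lemma varifold_inner_eq_iterated_integral:
  "varifold_inner sx st g a b h c d = integral {a..b} (\<lambda>s. integral {c..d} (varifold_integrand sx st g h s))"
  by (simp add: varifold_inner_def varifold_integrand_def[abs_def] mult.assoc)

lemma varifold_integrand_nonneg: "0 \<le> varifold_integrand sx st g h s t"
  by (simp add: varifold_integrand_def)

lemma varifold_integrand_le:
  assumes "norm (vector_derivative g (at s)) \<le> M" "norm (vector_derivative h (at t)) \<le> M"
    and "0 \<le> d" "d \<le> norm (g s - h t)" "0 < sx"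
  shows "varifold_integrand sx st g h s t \<le> exp 1 * exp (- 2 * d / sx) * M\<^sup>2"
proof -
  have "exp (- (norm (g s - h t))\<^sup>2 / sx\<^sup>2) \<le> exp 1 * exp (- 2 * d / sx)"
    using assms by (intro exp_neg_square_div_le) auto
  moreover have "exp (- (norm (unit_tangent g s - unit_tangent h t))\<^sup>2 / st\<^sup>2) \<le> 1"
    by simp
  moreover have "norm (vector_derivative g (at s)) * norm (vector_derivative h (at t)) \<le> M\<^sup>2"
    using assms(1,2) order_trans[OF norm_ge_zero assms(1)] by (simp add: power2_eq_square mult_mono)
  ultimately have "varifold_integrand sx st g h s t \<le> (exp 1 * exp (- 2 * d / sx)) * 1 * M\<^sup>2"
    unfolding varifold_integrand_def by (intro mult_mono) auto
  then show ?thesis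
    by simp
qed

lemma varifold_integrand_ge:
  assumes "0 \<le> m" "m \<le> norm (vector_derivative g (at s))" "m \<le> norm (vector_derivative h (at t))"
    and "norm (g s - h t) \<le> A * sx" "norm (unit_tangent g s - unit_tangent h t) \<le> B * st"
    and "0 < sx" "0 < st"
  shows "exp (- A\<^sup>2) * exp (- B\<^sup>2) * m\<^sup>2 \<le> varifold_integrand sx st g h s t"
proof -
  have "exp (- A\<^sup>2) \<le> exp (- (norm (g s - h t))\<^sup>2 / sx\<^sup>2)"
    using assms by (intro exp_neg_square_div_ge) auto
  moreover have "exp (- B\<^sup>2) \<le> exp (- (norm (unit_tangent g s - unit_tangent h t))\<^sup>2 / st\<^sup>2)"
    using assms by (intro exp_neg_square_div_ge) auto
  moreover have "m\<^sup>2 \<le> norm (vector_derivative g (at s)) * norm (vector_derivative h (at t))"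
    using assms(1-3) by (simp add: power2_eq_square mult_mono)
  ultimately show ?thesis
    unfolding varifold_integrand_def by (intro mult_mono) auto
qed

lemma smallo_if_quadratic_over_linear:
  fixes f g h :: "'a \<Rightarrow> real"
  assumes "(h \<longlongrightarrow> 0) F"
    and "eventually (\<lambda>p. \<bar>f p\<bar> \<le> C * (h p)\<^sup>2) F"
    and "eventually (\<lambda>p. c * \<bar>h p\<bar> \<le> \<bar>g p\<bar>) F" "c > 0"
  shows "f \<in> o[F](g)"
proof -
  have "f \<in> O[F](\<lambda>p. (h p)\<^sup>2)"
  proof (rule bigoI[of _ C])
    show "eventually (\<lambda>p. norm (f p) \<le> C * norm ((h p)\<^sup>2)) F"
      using assms(2) by eventually_elim simp
  qed
  moreover have "(\<lambda>p. (h p)\<^sup>2) \<in> o[F](h)"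
  proof (rule landau_o.smallI)
    fix e :: real
    assume "e > 0"
    with assms(1) have "eventually (\<lambda>p. dist (h p) 0 < e) F"
      by (rule tendstoD)
    then show "eventually (\<lambda>p. norm ((h p)\<^sup>2) \<le> e * norm (h p)) F"
    proof eventually_elim
      case (elim p)
      then have "\<bar>h p\<bar> * \<bar>h p\<bar> \<le> e * \<bar>h p\<bar>"
        by (intro mult_right_mono) auto
      then show ?case
        by (simp add: power2_eq_square abs_mult)
    qed
  qed
  ultimately have "f \<in> o[F](h)"
    by (rule landau_o.big_small_trans)
  moreover have "h \<in> O[F](g)"
  proof (rule bigoI[of _ "1 / c"])
    show "eventually (\<lambda>p. norm (h p) \<le> 1 / c * norm (g p)) F"
      using assms(3) by eventually_elim (use \<open>c > 0\<close> in \<open>simp add: field_simps\<close>)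
  qed
  ultimately show ?thesis
    by (rule landau_o.small_big_trans)
qed

lemma smallo_comparable_to_zero:
  fixes f g :: "real \<Rightarrow> real \<Rightarrow> real"
  assumes "0 < x0" "0 < C2"
    and f: "\<And>sx st. 0 < sx \<Longrightarrow> sx < x0 \<Longrightarrow> k1 * sx \<le> st \<Longrightarrow> \<bar>f sx st\<bar> \<le> C1 * sx\<^sup>2"
    and g: "\<And>sx st. 0 < sx \<Longrightarrow> sx < x0 \<Longrightarrow> k1 * sx \<le> st \<Longrightarrow> C2 * sx \<le> \<bar>g sx st\<bar>"
  shows "(\<lambda>p. f (fst p) (snd p)) \<in> o[comparable_to_zero k1 k2](\<lambda>p. g (fst p) (snd p))"
proof (rule smallo_if_quadratic_over_linear[OF _ _ _ \<open>0 < C2\<close>])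
  show fst: "(fst \<longlongrightarrow> 0) (comparable_to_zero k1 k2)"
    unfolding comparable_to_zero_def by (rule tendsto_fst[OF tendsto_ident_at, of "(0, 0)", simplified])
  have "eventually (\<lambda>p. fst p < x0) (comparable_to_zero k1 k2)"
    using order_tendstoD(2)[OF fst \<open>0 < x0\<close>] .
  moreover have "eventually (\<lambda>p. 0 < fst p \<and> k1 * fst p \<le> snd p) (comparable_to_zero k1 k2)"
    unfolding comparable_to_zero_def eventually_at by (auto intro: exI[of _ 1])
  ultimately have small: "eventually (\<lambda>p. 0 < fst p \<and> fst p < x0 \<and> k1 * fst p \<le> snd p) (comparable_to_zero k1 k2)"
    by eventually_elim auto
  show "eventually (\<lambda>p. \<bar>f (fst p) (snd p)\<bar> \<le> C1 * (fst p)\<^sup>2) (comparable_to_zero k1 k2)"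
    using small by eventually_elim (use f in auto)
  show "eventually (\<lambda>p. C2 * \<bar>fst p\<bar> \<le> \<bar>g (fst p) (snd p)\<bar>) (comparable_to_zero k1 k2)"
    using small by eventually_elim (use g in auto)
qed

section \<open>Regular arcs\<close>

locale regular_arc =
  fixes \<gamma> :: "real \<Rightarrow> 'a::euclidean_space" and a c :: real
  assumes differentiable: "\<And>t. t \<in> {a..c} \<Longrightarrow> \<gamma> differentiable (at t)"
    and continuous_derivative: "continuous_on {a..c} (\<lambda>t. vector_derivative \<gamma> (at t))"
    and regular: "\<And>t. t \<in> {a..c} \<Longrightarrow> vector_derivative \<gamma> (at t) \<noteq> 0"
begin

abbreviation \<gamma>' :: "real \<Rightarrow> 'a" where "\<gamma>' t \<equiv> vector_derivative \<gamma> (at t)"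

lemma subarc:
  assumes "a \<le> a'" "c' \<le> c"
  shows "regular_arc \<gamma> a' c'"
proof unfold_locales
  show "\<gamma> differentiable (at t)" if "t \<in> {a'..c'}" for t
    using that assms by (intro differentiable) auto
  show "continuous_on {a'..c'} \<gamma>'"
    using assms by (intro continuous_on_subset[OF continuous_derivative]) auto
  show "\<gamma>' t \<noteq> 0" if "t \<in> {a'..c'}" for t
    using that assms by (intro regular) auto
qed

lemma has_vector_derivative: "t \<in> {a..c} \<Longrightarrow> (\<gamma> has_vector_derivative \<gamma>' t) (at t)"
  using differentiable vector_derivative_works by blast

lemma continuous: "continuous_on {a..c} \<gamma>"
  by (meson continuous_at_imp_continuous_on differentiable differentiable_imp_continuous_within)

lemma continuous_unit_tangent: "continuous_on {a..c} (unit_tangent \<gamma>)"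
  unfolding unit_tangent_def[abs_def] using continuous_derivative regular by (intro continuous_on_sgn) auto

lemma speed_bounded:
  obtains M where "0 \<le> M" "\<And>t. t \<in> {a..c} \<Longrightarrow> norm (\<gamma>' t) \<le> M"
  using continuous_on_compact_bound[OF compact_Icc continuous_derivative] by blast

lemma speed_bounded_below:
  obtains m where "0 < m" "\<And>t. t \<in> {a..c} \<Longrightarrow> m \<le> norm (\<gamma>' t)"
proof (cases "a \<le> c")
  case True
  then obtain t0 where "t0 \<in> {a..c}" "\<And>t. t \<in> {a..c} \<Longrightarrow> norm (\<gamma>' t0) \<le> norm (\<gamma>' t)"
    using continuous_attains_inf[OF compact_Icc _ continuous_on_norm[OF continuous_derivative]] by auto
  then show ?thesis
    using regular[of t0] by (intro that[of "norm (\<gamma>' t0)"]) auto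
qed (use that[of 1] in auto)

lemma lipschitz_unit_tangent:
  assumes "L-lipschitz_on {a..c} \<gamma>'"
  obtains K where "K-lipschitz_on {a..c} (unit_tangent \<gamma>)"
proof -
  obtain m where m: "0 < m" "\<And>t. t \<in> {a..c} \<Longrightarrow> m \<le> norm (\<gamma>' t)"
    using speed_bounded_below by blast
  have "(2 * L / m)-lipschitz_on {a..c} (unit_tangent \<gamma>)"
  proof (rule lipschitz_onI)
    fix s t assume st: "s \<in> {a..c}" "t \<in> {a..c}"
    have "dist (unit_tangent \<gamma> s) (unit_tangent \<gamma> t) \<le> 2 * norm (\<gamma>' s - \<gamma>' t) / norm (\<gamma>' s)"
      unfolding unit_tangent_def dist_norm using st regular by (intro norm_sgn_diff_le) auto
    also have "\<dots> \<le> 2 * (L * dist s t) / m"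
      using lipschitz_onD[OF assms st] lipschitz_on_nonneg[OF assms] st m regular
      by (intro frac_le) (auto simp: dist_norm)
    finally show "dist (unit_tangent \<gamma> s) (unit_tangent \<gamma> t) \<le> 2 * L / m * dist s t"
      by simp
  qed (use lipschitz_on_nonneg[OF assms] m in simp)
  then show ?thesis ..
qed

lemma continuous_on_varifold_integrand:
  "continuous_on ({a..c} \<times> {a..c}) (\<lambda>(s, t). varifold_integrand sx st \<gamma> \<gamma> s t)"
proof -
  have fst: "continuous_on ({a..c} \<times> {a..c}) (\<lambda>p. f (fst p))" if "continuous_on {a..c} f"
    for f :: "real \<Rightarrow> 'b::topological_space"
    by (rule continuous_on_compose2[OF that continuous_on_fst[OF continuous_on_id]]) auto
  have snd: "continuous_on ({a..c} \<times> {a..c}) (\<lambda>p. f (snd p))" if "continuous_on {a..c} f"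
    for f :: "real \<Rightarrow> 'b::topological_space"
    by (rule continuous_on_compose2[OF that continuous_on_snd[OF continuous_on_id]]) auto
  show ?thesis
    unfolding varifold_integrand_def case_prod_beta divide_inverse
    by (intro continuous_intros fst snd continuous continuous_derivative continuous_unit_tangent)
qed

lemma varifold_inner_nonneg:
  assumes "{p..q} \<subseteq> {a..c}" "{r..w} \<subseteq> {a..c}"
  shows "0 \<le> varifold_inner sx st \<gamma> p q \<gamma> r w"
  unfolding varifold_inner_eq_iterated_integral
  using assms by (intro iterated_integral_nonneg varifold_integrand_nonneg
      continuous_on_subset[OF continuous_on_varifold_integrand]) auto

lemma varifold_inner_adjacent_arcs_le:
  assumes "a < b" "b < c" and inj: "inj_on \<gamma> {a..c}"
  obtains C where "\<And>sx st. 0 < sx \<Longrightarrow> varifold_inner sx st \<gamma> a b \<gamma> b c \<le> C * sx\<^sup>2"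
proof -
  obtain M where M: "0 \<le> M" "\<And>t. t \<in> {a..c} \<Longrightarrow> norm (\<gamma>' t) \<le> M"
    using speed_bounded by blast
  obtain m where m: "0 < m" "\<And>s t. s \<in> {a..b} \<Longrightarrow> t \<in> {b..c} \<Longrightarrow> m * (t - s) \<le> norm (\<gamma> t - \<gamma> s)"
    using chord_ge_across_regular_point[OF assms(1,2) has_vector_derivative continuous_derivative _ inj]
      regular assms(1,2) by auto
  have "varifold_inner sx st \<gamma> a b \<gamma> b c \<le> exp 1 * M\<^sup>2 / (2 * m / sx)\<^sup>2" if "0 < sx" for sx st
    unfolding varifold_inner_eq_iterated_integral
  proof (rule iterated_integral_le_exp_decay)
    show "continuous_on ({a..b} \<times> {b..c}) (\<lambda>(s, t). varifold_integrand sx st \<gamma> \<gamma> s t)"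
      using assms(1,2) by (intro continuous_on_subset[OF continuous_on_varifold_integrand]) auto
    show "varifold_integrand sx st \<gamma> \<gamma> s t \<le> exp 1 * M\<^sup>2 * exp (- (2 * m / sx) * (t - s))"
      if "s \<in> {a..b}" "t \<in> {b..c}" for s t
    proof -
      have "varifold_integrand sx st \<gamma> \<gamma> s t \<le> exp 1 * exp (- 2 * (m * (t - s)) / sx) * M\<^sup>2"
        using that M m \<open>0 < sx\<close> by (intro varifold_integrand_le) (auto simp: norm_minus_commute)
      moreover have "- 2 * (m * (t - s)) / sx = - (2 * m / sx) * (t - s)"
        by simp
      ultimately show ?thesis
        by (simp only: mult_ac)
    qed
  qed (use assms(1,2) m(1) \<open>0 < sx\<close> in auto)
  then show ?thesis
    using that[of "exp 1 * M\<^sup>2 / (2 * m)\<^sup>2"] by (simp add: power_divide)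
qed

lemma varifold_norm2_ge_linear:
  assumes "a < c" and lip: "L-lipschitz_on {a..c} \<gamma>'" and "0 < k"
  obtains C where "0 < C"
    "\<And>sx st. 0 < sx \<Longrightarrow> sx \<le> c - a \<Longrightarrow> k * sx \<le> st \<Longrightarrow> C * sx \<le> varifold_norm2 sx st \<gamma> a c"
proof -
  obtain M where M: "0 \<le> M" "\<And>t. t \<in> {a..c} \<Longrightarrow> norm (\<gamma>' t) \<le> M"
    using speed_bounded by blast
  then have lip_\<gamma>: "M-lipschitz_on {a..c} \<gamma>"
    using has_vector_derivative by (intro vector_derivative_bound_imp_lipschitz) auto
  obtain m where m: "0 < m" "\<And>t. t \<in> {a..c} \<Longrightarrow> m \<le> norm (\<gamma>' t)"
    using speed_bounded_below by blast
  obtain K where lip_T: "K-lipschitz_on {a..c} (unit_tangent \<gamma>)"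
    using lipschitz_unit_tangent[OF lip] by blast
  define \<mu> where "\<mu> = exp (- M\<^sup>2) * exp (- (K / k)\<^sup>2) * m\<^sup>2"
  have "(c - a) * \<mu> * sx \<le> varifold_norm2 sx st \<gamma> a c"
    if sx: "0 < sx" "sx \<le> c - a" "k * sx \<le> st" for sx st
  proof -
    have "(c - a) * sx * \<mu> \<le> integral {a..c} (\<lambda>s. integral {a..c} (varifold_integrand sx st \<gamma> \<gamma> s))"
    proof (rule iterated_integral_ge_near_diagonal[OF continuous_on_varifold_integrand sx(1,2)
          varifold_integrand_nonneg])
      fix s t
      assume s: "s \<in> {a..c}" and t: "t \<in> {a..c}" and near: "\<bar>s - t\<bar> \<le> sx"
      have "norm (\<gamma> s - \<gamma> t) \<le> M * sx"
        using lipschitz_onD[OF lip_\<gamma> s t] mult_left_mono[OF near M(1)] by (simp add: dist_norm)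
      moreover have "norm (unit_tangent \<gamma> s - unit_tangent \<gamma> t) \<le> K / k * st"
      proof -
        have "norm (unit_tangent \<gamma> s - unit_tangent \<gamma> t) \<le> K * sx"
          using lipschitz_onD[OF lip_T s t] mult_left_mono[OF near lipschitz_on_nonneg[OF lip_T]]
          by (simp add: dist_norm)
        also have "\<dots> = K / k * (k * sx)"
          using \<open>0 < k\<close> by simp
        also have "\<dots> \<le> K / k * st"
          using sx(3) lipschitz_on_nonneg[OF lip_T] \<open>0 < k\<close> by (intro mult_left_mono) auto
        finally show ?thesis .
      qed
      ultimately show "\<mu> \<le> varifold_integrand sx st \<gamma> \<gamma> s t"
        unfolding \<mu>_def using s t m sx mult_pos_pos[OF \<open>0 < k\<close> sx(1)]
        by (intro varifold_integrand_ge) auto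
    qed
    then show ?thesis
      by (simp add: varifold_norm2_def varifold_inner_eq_iterated_integral ac_simps)
  qed
  moreover have "0 < (c - a) * \<mu>"
    using \<open>a < c\<close> m(1) by (simp add: \<mu>_def)
  ultimately show ?thesis
    using that by blast
qed

end

lemma smooth_curve_on_continuous_vderiv:
  assumes "smooth_curve_on U \<gamma>" "S \<subseteq> U"
  shows "continuous_on S (vderiv_n k \<gamma>)"
  using assms unfolding smooth_curve_on_def
  by (meson continuous_at_imp_continuous_on differentiable_imp_continuous_within subsetD)

lemma smooth_curve_on_has_vderiv:
  assumes "smooth_curve_on U \<gamma>" "t \<in> U"
  shows "(vderiv_n k \<gamma> has_vector_derivative vderiv_n (Suc k) \<gamma> t) (at t)"
  using assms unfolding smooth_curve_on_def by (simp add: vector_derivative_works[symmetric])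

lemma smooth_curve_on_lipschitz_derivative:
  assumes "smooth_curve_on U \<gamma>" "{a..c} \<subseteq> U"
  obtains L where "L-lipschitz_on {a..c} (\<lambda>t. vector_derivative \<gamma> (at t))"
proof -
  obtain B where B: "0 \<le> B" "\<And>t. t \<in> {a..c} \<Longrightarrow> norm (vderiv_n (Suc (Suc 0)) \<gamma> t) \<le> B"
    using continuous_on_compact_bound[OF compact_Icc smooth_curve_on_continuous_vderiv[OF assms]] by blast
  have "B-lipschitz_on {a..c} (vderiv_n (Suc 0) \<gamma>)"
    by (rule vector_derivative_bound_imp_lipschitz[OF smooth_curve_on_has_vderiv[OF assms(1)] B(2,1)])
      (use assms(2) in auto)
  then show ?thesis
    using that by simp
qed

lemma regular_arc_if_smooth:
  assumes "smooth_curve_on U \<gamma>" "{a..c} \<subseteq> U" "\<forall>t\<in>{a..c}. vector_derivative \<gamma> (at t) \<noteq> 0"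
  shows "regular_arc \<gamma> a c"
proof
  show "\<gamma> differentiable (at t)" if "t \<in> {a..c}" for t
    using assms that unfolding smooth_curve_on_def by (metis subsetD vderiv_n.simps(1))
  show "continuous_on {a..c} (\<lambda>t. vector_derivative \<gamma> (at t))"
    using smooth_curve_on_continuous_vderiv[OF assms(1,2), of "Suc 0"] by simp
qed (use assms(3) in auto)

theorem lemma1:
  fixes \<gamma> :: "real \<Rightarrow> 'a::euclidean_space"
    and U :: "real set" and a b c k1 k2 :: real
  assumes abc: "a < b" "b < c"
    and smooth: "smooth_curve_on U \<gamma>" "{a..c} \<subseteq> U"
    and regular: "\<forall>t\<in>{a..c}. vector_derivative \<gamma> (at t) \<noteq> 0"
    and inj: "inj_on \<gamma> {a..c}"
    and A1: "\<forall>s\<in>{a..b}. \<forall>s'\<in>{a..b}. \<forall>t\<in>{b..c}. \<forall>t'\<in>{b..c}.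
               arc_len \<gamma> s t \<le> arc_len \<gamma> s' t' \<longrightarrow> norm (\<gamma> s - \<gamma> t) \<le> norm (\<gamma> s' - \<gamma> t')"
    and k: "0 < k1" "0 < k2"
  shows "(\<lambda>p. varifold_inner (fst p) (snd p) \<gamma> a b \<gamma> b c)
           \<in> smallo (comparable_to_zero k1 k2)
             (\<lambda>p. varifold_norm2 (fst p) (snd p) \<gamma> a b + varifold_norm2 (fst p) (snd p) \<gamma> b c)"
proof -
  interpret regular_arc \<gamma> a c
    using regular_arc_if_smooth[OF smooth regular] .
  interpret left: regular_arc \<gamma> a b
    using subarc abc by simp
  obtain L where "L-lipschitz_on {a..c} \<gamma>'"
    using smooth_curve_on_lipschitz_derivative[OF smooth] by blast
  then have lip: "L-lipschitz_on {a..b} \<gamma>'"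
    using abc by (auto intro: lipschitz_on_subset)
  obtain C1 where C1: "\<And>sx st. 0 < sx \<Longrightarrow> varifold_inner sx st \<gamma> a b \<gamma> b c \<le> C1 * sx\<^sup>2"
    using varifold_inner_adjacent_arcs_le[OF abc inj] by blast
  obtain C2 where C2: "0 < C2"
    "\<And>sx st. 0 < sx \<Longrightarrow> sx \<le> b - a \<Longrightarrow> k1 * sx \<le> st \<Longrightarrow> C2 * sx \<le> varifold_norm2 sx st \<gamma> a b"
    using left.varifold_norm2_ge_linear[OF abc(1) lip k(1)] by blast
  have nonneg: "0 \<le> varifold_inner sx st \<gamma> a b \<gamma> b c" "0 \<le> varifold_norm2 sx st \<gamma> b c" for sx st
    unfolding varifold_norm2_def using abc by (intro varifold_inner_nonneg; auto)+
  show ?thesis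
  proof (rule smallo_comparable_to_zero[of "b - a" C2])
    show "\<bar>varifold_inner sx st \<gamma> a b \<gamma> b c\<bar> \<le> C1 * sx\<^sup>2" if "0 < sx" "sx < b - a" "k1 * sx \<le> st"
      for sx st
      using C1[OF that(1)] nonneg(1) by simp
    show "C2 * sx \<le> \<bar>varifold_norm2 sx st \<gamma> a b + varifold_norm2 sx st \<gamma> b c\<bar>"
      if "0 < sx" "sx < b - a" "k1 * sx \<le> st" for sx st
      using C2(2)[of sx st] nonneg(2)[of sx st] that by simp
  qed (use abc C2(1) in auto)
qed

end
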